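(* Let $F=(\langle a_\alpha,b_\alpha,F_\alpha\rangle)_{\alpha\in A}$ be an ordinal sum of t-norms, $f:[0,1]\to[0,1]$ strictly increasing with $B_A^f\neq\emptyset$, and $\{f_\beta\}_{\beta\in B_A^f}$ the decomposition set of $f$. Let $T(x,y)=f^{(-1)}(F(f(x),f(y)))$ for $x,y\in[0,1]$ and, for $\beta\in B_A^f$, $T^\beta(x,y)=f_\beta^{(-1)}(F^\beta(f_\beta(x),f_\beta(y)))$ for $x,y\in[s_\beta,t_\beta]$. Then for every $\beta\in B_A^f$, $T(x,y)=T^\beta(x,y)$ for all $x,y\in[s_\beta,t_\beta]$ with $(x,y)\neq(s_\beta,s_\beta)$.
   Context: A t-norm is a commutative, associative map $[0,1]^2\to[0,1]$, non-decreasing in each variable, with neutral element $1$. For a non-decreasing $g:[p,q]\to[u,v]$, the pseudo-inverse is $g^{(-1)}(y)=\sup\{x\in[p,q]:g(x)<y\}$ ($y\in[u,v]$), with $\sup\emptyset=p$. Ordinal sum: $A\neq\emptyset$ is totally ordered, $\{(a_\alpha,b_\alpha)\}_{\alpha\in A}$ are pairwise disjoint non-empty open subintervals of $[0,1]$, $F_\alpha$ are t-norms, and $F(x,y)=a_\alpha+(b_\alpha-a_\alpha)F_\alpha\big(\frac{x-a_\alpha}{b_\alpha-a_\alpha},\frac{y-a_\alpha}{b_\alpha-a_\alpha}\big)$ if $(x,y)\in[a_\alpha,b_\alpha]^2$, and $F(x,y)=\min\{x,y\}$ otherwise. For $\alpha\in A$, $F^\alpha:[a_\alpha,b_\alpha]^2\to[a_\alpha,b_\alpha]$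 is $F^\alpha(x,y)=a_\alpha+(b_\alpha-a_\alpha)F_\alpha\big(\frac{x-a_\alpha}{b_\alpha-a_\alpha},\frac{y-a_\alpha}{b_\alpha-a_\alpha}\big)$. For $\alpha\in A$: $s_\alpha=\inf\{x\in[0,1]:f(x)\ge a_\alpha\}$, $t_\alpha=\sup\{x\in[0,1]:f(x)\le b_\alpha\}$ (with $\inf\emptyset=1$, $\sup\emptyset=0$); $B_A^f=\{\beta\in A: s_\beta<t_\beta\}$. The decomposition set consists of the strictly increasing maps $f_\beta:[s_\beta,t_\beta]\to[a_\beta,b_\beta]$ ($\beta\in B_A^f$) given by $f_\beta(x)=f(x)$ for $x\in(s_\beta,t_\beta)$; $f_\beta(s_\beta)=f(s_\beta)$ if $f(s_\beta)\ge a_\beta$ and $f_\beta(s_\beta)=a_\beta$ if $f(s_\beta)<a_\beta$; $f_\beta(t_\beta)=f(t_\beta)$ if $f(t_\beta)\le b_\beta$ and $f_\beta(t_\beta)=b_\beta$ if $f(t_\beta)>b_\beta$. *)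

theory Defs
  imports Main "HOL.Real"
begin

definition is_tnorm :: "(real \<Rightarrow> real \<Rightarrow> real) \<Rightarrow> bool" where
  "is_tnorm T \<longleftrightarrow>
     (\<forall>x\<in>{0..1}. \<forall>y\<in>{0..1}. T x y \<in> {0..1}) \<and>
     (\<forall>x\<in>{0..1}. \<forall>y\<in>{0..1}. T x y = T y x) \<and>
     (\<forall>x\<in>{0..1}. \<forall>y\<in>{0..1}. \<forall>z\<in>{0..1}. T (T x y) z = T x (T y z)) \<and>
     (\<forall>x\<in>{0..1}. \<forall>x'\<in>{0..1}. \<forall>y\<in>{0..1}. x \<le> x' \<longrightarrow> T x y \<le> T x' y \<and> T y x \<le> T y x') \<and>
     (\<forall>x\<in>{0..1}. T x 1 = x)"

definition pinv :: "(real \<Rightarrow> real) \<Rightarrow> real \<Rightarrow> real \<Rightarrow> real \<Rightarrow> real" where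
  "pinv g p q y = (if {x\<in>{p..q}. g x < y} = {} then p else Sup {x\<in>{p..q}. g x < y})"

definition ordsum_data :: "'i::linorder set \<Rightarrow> ('i \<Rightarrow> real) \<Rightarrow> ('i \<Rightarrow> real) \<Rightarrow>
    ('i \<Rightarrow> real \<Rightarrow> real \<Rightarrow> real) \<Rightarrow> bool" where
  "ordsum_data A a b Fs \<longleftrightarrow> A \<noteq> {} \<and>
     (\<forall>\<alpha>\<in>A. 0 \<le> a \<alpha> \<and> a \<alpha> < b \<alpha> \<and> b \<alpha> \<le> 1 \<and> is_tnorm (Fs \<alpha>)) \<and>
     (\<forall>\<alpha>\<in>A. \<forall>\<gamma>\<in>A. \<alpha> \<noteq> \<gamma> \<longrightarrow> {a \<alpha><..<b \<alpha>} \<inter> {a \<gamma><..<b \<gamma>} = {})"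

definition summand :: "('i \<Rightarrow> real) \<Rightarrow> ('i \<Rightarrow> real) \<Rightarrow> ('i \<Rightarrow> real \<Rightarrow> real \<Rightarrow> real)
    \<Rightarrow> 'i \<Rightarrow> real \<Rightarrow> real \<Rightarrow> real" where
  "summand a b Fs \<alpha> x y = a \<alpha> + (b \<alpha> - a \<alpha>) *
      Fs \<alpha> ((x - a \<alpha>) / (b \<alpha> - a \<alpha>)) ((y - a \<alpha>) / (b \<alpha> - a \<alpha>))"

text \<open>The ordinal sum. (Where closed squares overlap, i.e. at a common endpoint on the
  diagonal, all candidate summands give the same value, so the choice is immaterial.)\<close>
definition ordsum :: "'i set \<Rightarrow> ('i \<Rightarrow> real) \<Rightarrow> ('i \<Rightarrow> real) \<Rightarrow> ('i \<Rightarrow> real \<Rightarrow> real \<Rightarrow> real)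
    \<Rightarrow> real \<Rightarrow> real \<Rightarrow> real" where
  "ordsum A a b Fs x y =
     (if \<exists>\<alpha>\<in>A. x \<in> {a \<alpha>..b \<alpha>} \<and> y \<in> {a \<alpha>..b \<alpha>}
      then summand a b Fs (SOME \<alpha>. \<alpha> \<in> A \<and> x \<in> {a \<alpha>..b \<alpha>} \<and> y \<in> {a \<alpha>..b \<alpha>}) x y
      else min x y)"

definition s_pt :: "(real \<Rightarrow> real) \<Rightarrow> ('i \<Rightarrow> real) \<Rightarrow> 'i \<Rightarrow> real" where
  "s_pt f a \<alpha> = (if {x\<in>{0..1}. f x \<ge> a \<alpha>} = {} then 1 else Inf {x\<in>{0..1}. f x \<ge> a \<alpha>})"

definition t_pt :: "(real \<Rightarrow> real) \<Rightarrow> ('i \<Rightarrow> real) \<Rightarrow> 'i \<Rightarrow> real" where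
  "t_pt f b \<alpha> = (if {x\<in>{0..1}. f x \<le> b \<alpha>} = {} then 0 else Sup {x\<in>{0..1}. f x \<le> b \<alpha>})"

definition B_set :: "'i set \<Rightarrow> ('i \<Rightarrow> real) \<Rightarrow> ('i \<Rightarrow> real) \<Rightarrow> (real \<Rightarrow> real) \<Rightarrow> 'i set" where
  "B_set A a b f = {\<beta>\<in>A. s_pt f a \<beta> < t_pt f b \<beta>}"

definition fdec :: "(real \<Rightarrow> real) \<Rightarrow> ('i \<Rightarrow> real) \<Rightarrow> ('i \<Rightarrow> real) \<Rightarrow> 'i \<Rightarrow> real \<Rightarrow> real" where
  "fdec f a b \<beta> x =
     (if x = s_pt f a \<beta> then (if f x \<ge> a \<beta> then f x else a \<beta>)
      else if x = t_pt f b \<beta> then (if f x \<le> b \<beta> then f x else b \<beta>)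
      else f x)"

end

theory Submission
  imports Defs
begin

text \<open>On values in \<open>[a\<^sub>\<beta>, b\<^sub>\<beta>]\<close> the pseudo-inverses of \<open>f\<close> and of \<open>f\<^sub>\<beta>\<close> agree, because
  \<open>f\<close> crosses \<open>a\<^sub>\<beta>\<close> at \<open>s\<^sub>\<beta>\<close> and \<open>b\<^sub>\<beta>\<close> at \<open>t\<^sub>\<beta>\<close>, and \<open>f\<^sub>\<beta>\<close> only clips \<open>f\<close> at these two points.
  So it suffices to compare \<open>F(f x, f y)\<close> with \<open>F\<^sup>\<beta>(f\<^sub>\<beta> x, f\<^sub>\<beta> y)\<close>. They coincide when \<open>f x, f y\<close>
  lie in \<open>[a\<^sub>\<beta>, b\<^sub>\<beta>]\<close>; otherwise one of \<open>x, y\<close> is an endpoint where \<open>f\<close> leaves that interval,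
  \<open>F\<close> is the minimum there, and both values are mapped to the same point by \<open>f\<^sup>(\<^sup>-\<^sup>1\<^sup>)\<close>.
  The excluded point \<open>(s\<^sub>\<beta>, s\<^sub>\<beta>)\<close> is where \<open>F(f s\<^sub>\<beta>, f s\<^sub>\<beta>)\<close> may fall below \<open>f s\<^sub>\<beta>\<close>.\<close>

section \<open>Pseudo-inverses\<close>

lemma pinv_eqI:
  fixes g :: "real \<Rightarrow> real"
  assumes "p \<le> c" "c \<le> q"
    and below: "\<forall>z\<in>{p..q}. z < c \<longrightarrow> g z < w"
    and above: "\<forall>z\<in>{p..q}. c < z \<longrightarrow> w \<le> g z"
  shows "pinv g p q w = c"
proof -
  define S where "S = {x\<in>{p..q}. g x < w}"
  have pinv_S: "pinv g p q w = (if S = {} then p else Sup S)"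
    unfolding pinv_def S_def ..
  have le_c: "x \<le> c" if "x \<in> S" for x
    using that above by (force simp: S_def)
  have in_S: "z \<in> S" if "z \<in> {p..q}" "z < c" for z
    using below that by (simp add: S_def)
  show ?thesis
  proof (cases "S = {}")
    case True
    then have "c = p" using in_S[of p] assms(1,2) by fastforce
    then show ?thesis using True pinv_S by simp
  next
    case False
    have "Sup S = c"
    proof (rule cSup_eq_non_empty)
      fix y assume ub: "\<And>x. x \<in> S \<Longrightarrow> x \<le> y"
      show "c \<le> y"
      proof (rule ccontr)
        assume "\<not> c \<le> y"
        obtain x0 where "x0 \<in> S" using False by blast
        then have "p \<le> y" using ub[of x0] by (auto simp: S_def)
        then have "(y + c) / 2 \<in> S" using \<open>\<not> c \<le> y\<close> assms(2) by (intro in_S) auto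
        then show False using ub \<open>\<not> c \<le> y\<close> by fastforce
      qed
    qed (use False le_c in auto)
    then show ?thesis using False pinv_S by simp
  qed
qed

lemma pinv_threshold:
  fixes g :: "real \<Rightarrow> real"
  assumes "mono_on {p..q} g" and "p \<le> q"
  shows "pinv g p q w \<in> {p..q}"
    and "\<forall>z\<in>{p..q}. z < pinv g p q w \<longrightarrow> g z < w"
    and "\<forall>z\<in>{p..q}. pinv g p q w < z \<longrightarrow> w \<le> g z"
proof -
  define S where "S = {x\<in>{p..q}. g x < w}"
  have pinv_S: "pinv g p q w = (if S = {} then p else Sup S)"
    unfolding pinv_def S_def ..
  have bdd: "bdd_above S" by (auto simp: S_def intro: bdd_aboveI[of _ q])
  have "pinv g p q w \<in> {p..q} \<and> (\<forall>z\<in>{p..q}. z < pinv g p q w \<longrightarrow> g z < w) \<and>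
    (\<forall>z\<in>{p..q}. pinv g p q w < z \<longrightarrow> w \<le> g z)"
  proof (cases "S = {}")
    case True
    then show ?thesis using \<open>p \<le> q\<close> pinv_S by (auto simp: S_def not_less)
  next
    case False
    then have pinv: "pinv g p q w = Sup S" using pinv_S by simp
    obtain x0 where "x0 \<in> S" using False by blast
    then have "p \<le> Sup S" using cSup_upper[OF _ bdd] by (force simp: S_def)
    moreover have "Sup S \<le> q" using False by (intro cSup_least) (auto simp: S_def)
    moreover have "g z < w" if "z \<in> {p..q}" "z < Sup S" for z
    proof -
      obtain z' where "z' \<in> S" "z < z'" using less_cSupD[OF False \<open>z < Sup S\<close>] by blast
      then show ?thesis using mono_onD[OF assms(1), of z z'] that by (force simp: S_def)
    qed
    moreover have "w \<le> g z" if "z \<in> {p..q}" "Sup S < z" for z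
      using that cSup_upper[OF _ bdd, of z] by (force simp: S_def)
    ultimately show ?thesis using pinv by auto
  qed
  then show "pinv g p q w \<in> {p..q}"
    and "\<forall>z\<in>{p..q}. z < pinv g p q w \<longrightarrow> g z < w"
    and "\<forall>z\<in>{p..q}. pinv g p q w < z \<longrightarrow> w \<le> g z" by auto
qed

lemma pinv_apply:
  fixes g :: "real \<Rightarrow> real"
  assumes "strict_mono_on {p..q} g" and "c \<in> {p..q}"
  shows "pinv g p q (g c) = c"
  using assms strict_mono_onD[OF assms(1)]
  by (intro pinv_eqI) (auto intro: less_imp_le)

section \<open>T-norms\<close>

context
  fixes T :: "real \<Rightarrow> real \<Rightarrow> real"
  assumes tnorm: "is_tnorm T"
begin

lemma tnorm_closed: "x \<in> {0..1} \<Longrightarrow> y \<in> {0..1} \<Longrightarrow> T x y \<in> {0..1}"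
  using tnorm by (simp add: is_tnorm_def)

lemma tnorm_commute: "x \<in> {0..1} \<Longrightarrow> y \<in> {0..1} \<Longrightarrow> T x y = T y x"
  using tnorm by (simp add: is_tnorm_def)

lemma tnorm_right_one: "x \<in> {0..1} \<Longrightarrow> T x 1 = x"
  using tnorm unfolding is_tnorm_def by blast

lemma tnorm_left_one: "x \<in> {0..1} \<Longrightarrow> T 1 x = x"
  using tnorm_commute[of 1 x] tnorm_right_one[of x] by simp

lemma tnorm_le_left: "x \<in> {0..1} \<Longrightarrow> y \<in> {0..1} \<Longrightarrow> T x y \<le> x"
  using tnorm tnorm_right_one[of x] unfolding is_tnorm_def by (metis atLeastAtMost_iff order_refl zero_le_one)

lemma tnorm_left_zero: "x \<in> {0..1} \<Longrightarrow> T 0 x = 0"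
  using tnorm_le_left[of 0 x] tnorm_closed[of 0 x] by simp

end

section \<open>Rescaled summands\<close>

locale rescaled_summand =
  fixes a b :: "'i \<Rightarrow> real" and Fs :: "'i \<Rightarrow> real \<Rightarrow> real \<Rightarrow> real" and \<alpha> :: 'i
  assumes lt: "a \<alpha> < b \<alpha>" and tnorm: "is_tnorm (Fs \<alpha>)"
begin

lemma rescale_in_unit: "y \<in> {a \<alpha>..b \<alpha>} \<Longrightarrow> (y - a \<alpha>) / (b \<alpha> - a \<alpha>) \<in> {0..1}"
  using lt by (auto simp: divide_simps)

lemma summand_bot_left: "y \<in> {a \<alpha>..b \<alpha>} \<Longrightarrow> summand a b Fs \<alpha> (a \<alpha>) y = a \<alpha>"
  using tnorm_left_zero[OF tnorm rescale_in_unit] by (simp add: summand_def)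

lemma summand_top_left: "y \<in> {a \<alpha>..b \<alpha>} \<Longrightarrow> summand a b Fs \<alpha> (b \<alpha>) y = y"
  using tnorm_left_one[OF tnorm rescale_in_unit] lt by (simp add: summand_def)

lemma summand_top_right: "y \<in> {a \<alpha>..b \<alpha>} \<Longrightarrow> summand a b Fs \<alpha> y (b \<alpha>) = y"
  using tnorm_right_one[OF tnorm rescale_in_unit] lt by (simp add: summand_def)

lemma summand_commute:
  "u \<in> {a \<alpha>..b \<alpha>} \<Longrightarrow> v \<in> {a \<alpha>..b \<alpha>} \<Longrightarrow> summand a b Fs \<alpha> u v = summand a b Fs \<alpha> v u"
  using tnorm_commute[OF tnorm rescale_in_unit rescale_in_unit] by (simp add: summand_def)

lemma summand_in_interval:
  assumes "u \<in> {a \<alpha>..b \<alpha>}" "v \<in> {a \<alpha>..b \<alpha>}"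
  shows "summand a b Fs \<alpha> u v \<in> {a \<alpha>..b \<alpha>}"
proof -
  let ?T = "Fs \<alpha> ((u - a \<alpha>) / (b \<alpha> - a \<alpha>)) ((v - a \<alpha>) / (b \<alpha> - a \<alpha>))"
  have "?T \<in> {0..1}" using tnorm_closed[OF tnorm rescale_in_unit rescale_in_unit] assms .
  then have "(b \<alpha> - a \<alpha>) * ?T \<in> {0..b \<alpha> - a \<alpha>}"
    using lt mult_left_mono[of ?T 1 "b \<alpha> - a \<alpha>"] by auto
  then show ?thesis by (simp add: summand_def)
qed

lemma summand_le_left:
  assumes "u \<in> {a \<alpha>..b \<alpha>}" "v \<in> {a \<alpha>..b \<alpha>}"
  shows "summand a b Fs \<alpha> u v \<le> u"
proof -
  let ?u = "(u - a \<alpha>) / (b \<alpha> - a \<alpha>)" and ?v = "(v - a \<alpha>) / (b \<alpha> - a \<alpha>)"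
  have "(b \<alpha> - a \<alpha>) * Fs \<alpha> ?u ?v \<le> (b \<alpha> - a \<alpha>) * ?u"
    using tnorm_le_left[OF tnorm rescale_in_unit rescale_in_unit] assms lt
    by (intro mult_left_mono) auto
  then show ?thesis using lt by (simp add: summand_def)
qed

end

section \<open>Ordinal sums\<close>

locale ordinal_sum =
  fixes A :: "'i::linorder set" and a b :: "'i \<Rightarrow> real" and Fs :: "'i \<Rightarrow> real \<Rightarrow> real \<Rightarrow> real"
  assumes ordsum: "ordsum_data A a b Fs"
begin

lemma ordsum_data_lt: "\<alpha> \<in> A \<Longrightarrow> a \<alpha> < b \<alpha>"
  using ordsum by (simp add: ordsum_data_def)

lemma rescaled_summand: "\<alpha> \<in> A \<Longrightarrow> rescaled_summand a b Fs \<alpha>"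
  using ordsum by (simp add: ordsum_data_def rescaled_summand_def)

lemma squares_disjoint:
  assumes "\<alpha> \<in> A" "\<gamma> \<in> A" "\<alpha> \<noteq> \<gamma>"
  shows "b \<alpha> \<le> a \<gamma> \<or> b \<gamma> \<le> a \<alpha>"
proof (rule ccontr)
  assume "\<not> (b \<alpha> \<le> a \<gamma> \<or> b \<gamma> \<le> a \<alpha>)"
  then have "max (a \<alpha>) (a \<gamma>) < min (b \<alpha>) (b \<gamma>)"
    using ordsum_data_lt[OF assms(1)] ordsum_data_lt[OF assms(2)] by simp
  then obtain m where "max (a \<alpha>) (a \<gamma>) < m" "m < min (b \<alpha>) (b \<gamma>)" using dense by blast
  then have "m \<in> {a \<alpha><..<b \<alpha>} \<inter> {a \<gamma><..<b \<gamma>}" by simp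
  moreover have "{a \<alpha><..<b \<alpha>} \<inter> {a \<gamma><..<b \<gamma>} = {}"
    using ordsum assms unfolding ordsum_data_def by blast
  ultimately show False by blast
qed

lemma ordsum_cases:
  obtains (summand) \<alpha> where "\<alpha> \<in> A" "u \<in> {a \<alpha>..b \<alpha>}" "v \<in> {a \<alpha>..b \<alpha>}"
      "ordsum A a b Fs u v = summand a b Fs \<alpha> u v"
  | (min) "\<not> (\<exists>\<alpha>\<in>A. u \<in> {a \<alpha>..b \<alpha>} \<and> v \<in> {a \<alpha>..b \<alpha>})" "ordsum A a b Fs u v = min u v"
proof (cases "\<exists>\<alpha>\<in>A. u \<in> {a \<alpha>..b \<alpha>} \<and> v \<in> {a \<alpha>..b \<alpha>}")
  case True
  let ?P = "\<lambda>\<alpha>. \<alpha> \<in> A \<and> u \<in> {a \<alpha>..b \<alpha>} \<and> v \<in> {a \<alpha>..b \<alpha>}"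
  define \<alpha> where "\<alpha> = (SOME \<alpha>. ?P \<alpha>)"
  obtain \<gamma> where "?P \<gamma>" using True by blast
  then have "?P \<alpha>" unfolding \<alpha>_def by (rule someI[where P = ?P])
  moreover have "ordsum A a b Fs u v = summand a b Fs \<alpha> u v"
    unfolding ordsum_def \<alpha>_def using True by (rule if_P)
  ultimately show ?thesis using summand[of \<alpha>] by blast
next
  case False
  moreover have "ordsum A a b Fs u v = min u v"
    unfolding ordsum_def using False by (rule if_not_P)
  ultimately show ?thesis using min by blast
qed

lemma ordsum_eq_summand:
  assumes "\<beta> \<in> A" "u \<in> {a \<beta>..b \<beta>}" "v \<in> {a \<beta>..b \<beta>}"
  shows "ordsum A a b Fs u v = summand a b Fs \<beta> u v"
proof (cases u v rule: ordsum_cases)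
  case (summand \<alpha>)
  interpret \<alpha>: rescaled_summand a b Fs \<alpha> using rescaled_summand summand(1) .
  interpret \<beta>: rescaled_summand a b Fs \<beta> using rescaled_summand assms(1) .
  show ?thesis
  proof (cases "\<alpha> = \<beta>")
    case False
    \<comment> \<open>distinct squares meet at most in a common corner, which both summands fix\<close>
    then consider "b \<beta> \<le> a \<alpha>" | "b \<alpha> \<le> a \<beta>"
      using squares_disjoint[OF \<open>\<alpha> \<in> A\<close> \<open>\<beta> \<in> A\<close>] by blast
    then show ?thesis
    proof cases
      case 1
      then have "u = a \<alpha>" "v = a \<alpha>" "a \<alpha> = b \<beta>" using summand(2,3) assms(2,3) by auto
      then show ?thesis
        using summand(4) \<alpha>.summand_bot_left[of "a \<alpha>"] \<beta>.summand_top_left[of "b \<beta>"] \<alpha>.lt \<beta>.lt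
        by simp
    next
      case 2
      then have "u = b \<alpha>" "v = b \<alpha>" "b \<alpha> = a \<beta>" using summand(2,3) assms(2,3) by auto
      then show ?thesis
        using summand(4) \<alpha>.summand_top_left[of "b \<alpha>"] \<beta>.summand_bot_left[of "a \<beta>"] \<alpha>.lt \<beta>.lt
        by simp
    qed
  qed (use summand(4) in simp)
next
  case min
  then show ?thesis using assms by blast
qed

lemma ordsum_commute: "ordsum A a b Fs u v = ordsum A a b Fs v u"
proof (cases u v rule: ordsum_cases)
  case (summand \<alpha>)
  then show ?thesis
    using ordsum_eq_summand[of \<alpha> v u]
      rescaled_summand.summand_commute[OF rescaled_summand[OF summand(1)]] by simp
next
  case min
  then show ?thesis by (cases v u rule: ordsum_cases) (auto simp: min.commute)
qed

lemma ordsum_across_endpoint: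
  assumes "\<beta> \<in> A" "c = a \<beta> \<or> c = b \<beta>" "u < c" "c < v"
  shows "ordsum A a b Fs u v = u"
proof (cases u v rule: ordsum_cases)
  case (summand \<alpha>)
  \<comment> \<open>then \<open>c\<close> would be an endpoint of the square of \<open>\<beta>\<close> strictly inside that of \<open>\<alpha>\<close>\<close>
  then have "\<alpha> \<noteq> \<beta>" using assms by auto
  then have "b \<alpha> \<le> a \<beta> \<or> b \<beta> \<le> a \<alpha>" using squares_disjoint summand(1) assms(1) by blast
  then show ?thesis using summand(2,3) assms ordsum_data_lt[OF assms(1)] by auto
next
  case min
  then show ?thesis using assms by simp
qed

lemma ordsum_diag_above:
  assumes "\<beta> \<in> A" "b \<beta> < u"
  shows "ordsum A a b Fs u u \<in> {b \<beta>..u}"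
proof (cases u u rule: ordsum_cases)
  case (summand \<alpha>)
  then have "\<alpha> \<noteq> \<beta>" using assms by auto
  then have "b \<beta> \<le> a \<alpha>"
    using squares_disjoint summand(1,2) assms ordsum_data_lt[OF assms(1)] by fastforce
  then show ?thesis
    using summand rescaled_summand.summand_in_interval rescaled_summand.summand_le_left
      rescaled_summand by (metis atLeastAtMost_iff order_trans)
next
  case min
  then show ?thesis using assms by simp
qed

end

section \<open>The decomposition set\<close>

locale decomposition_component =
  fixes f :: "real \<Rightarrow> real" and a b :: "'i \<Rightarrow> real" and \<beta> :: 'i
  assumes mono: "strict_mono_on {0..1} f"
    and nondegenerate: "s_pt f a \<beta> < t_pt f b \<beta>"
begin

abbreviation s where "s \<equiv> s_pt f a \<beta>"
abbreviation t where "t \<equiv> t_pt f b \<beta>"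

lemma s_nonneg: "0 \<le> s"
  unfolding s_pt_def by (auto intro!: cInf_greatest)

lemma t_le_one: "t \<le> 1"
  unfolding t_pt_def by (auto intro!: cSup_least)

lemma s_in_unit: "s \<in> {0..1}" and t_in_unit: "t \<in> {0..1}"
  using s_nonneg t_le_one nondegenerate by auto

lemma in_unit: "x \<in> {s..t} \<Longrightarrow> x \<in> {0..1}"
  using s_nonneg t_le_one by auto

lemma s_eq_Inf: "s = Inf {x\<in>{0..1}. a \<beta> \<le> f x}"
  and s_set_nonempty: "{x\<in>{0..1}. a \<beta> \<le> f x} \<noteq> {}"
  using nondegenerate t_le_one unfolding s_pt_def by (auto split: if_splits)

lemma t_eq_Sup: "t = Sup {x\<in>{0..1}. f x \<le> b \<beta>}"
  and t_set_nonempty: "{x\<in>{0..1}. f x \<le> b \<beta>} \<noteq> {}"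
  using nondegenerate s_nonneg unfolding t_pt_def by (auto split: if_splits)

lemma f_less_a_below_s:
  assumes "z \<in> {0..1}" "z < s"
  shows "f z < a \<beta>"
proof (rule ccontr)
  assume "\<not> f z < a \<beta>"
  then have "Inf {x\<in>{0..1}. a \<beta> \<le> f x} \<le> z"
    using assms(1) by (intro cInf_lower bdd_belowI[of _ 0]) auto
  then show False using assms(2) s_eq_Inf by simp
qed

lemma f_greater_a_above_s:
  assumes "z \<in> {0..1}" "s < z"
  shows "a \<beta> < f z"
proof -
  obtain z' where "z' \<in> {0..1}" "a \<beta> \<le> f z'" "z' < z"
    using cInf_lessD[OF s_set_nonempty, of z] assms(2) s_eq_Inf by auto
  then show ?thesis using strict_mono_onD[OF mono _ assms(1)] by fastforce
qed

lemma f_greater_b_above_t: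
  assumes "z \<in> {0..1}" "t < z"
  shows "b \<beta> < f z"
proof (rule ccontr)
  assume "\<not> b \<beta> < f z"
  then have "z \<le> Sup {x\<in>{0..1}. f x \<le> b \<beta>}"
    using assms(1) by (intro cSup_upper bdd_aboveI[of _ 1]) auto
  then show False using assms(2) t_eq_Sup by simp
qed

lemma f_less_b_below_t:
  assumes "z \<in> {0..1}" "z < t"
  shows "f z < b \<beta>"
proof -
  obtain z' where "z' \<in> {0..1}" "f z' \<le> b \<beta>" "z < z'"
    using less_cSupD[OF t_set_nonempty, of z] assms(2) t_eq_Sup by auto
  then show ?thesis using strict_mono_onD[OF mono assms(1)] by fastforce
qed

lemma a_less_b: "a \<beta> < b \<beta>"
proof -
  have "(s + t) / 2 \<in> {0..1}" using s_in_unit t_in_unit by simp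
  then show ?thesis
    using f_greater_a_above_s[of "(s + t) / 2"] f_less_b_below_t[of "(s + t) / 2"] nondegenerate
    by simp
qed

lemma f_s_less_b: "f s < b \<beta>" and a_less_f_t: "a \<beta> < f t"
  using f_less_b_below_t[OF s_in_unit nondegenerate]
    f_greater_a_above_s[OF t_in_unit nondegenerate] .

lemma fdec_eq_f: "f x \<in> {a \<beta>..b \<beta>} \<Longrightarrow> fdec f a b \<beta> x = f x"
  by (auto simp: fdec_def)

lemma fdec_s: "fdec f a b \<beta> s = max (f s) (a \<beta>)"
  by (simp add: fdec_def max_def)

lemma fdec_t: "fdec f a b \<beta> t = min (f t) (b \<beta>)"
  using nondegenerate by (simp add: fdec_def min_def)

lemma fdec_interior: "s < x \<Longrightarrow> x < t \<Longrightarrow> fdec f a b \<beta> x = f x"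
  by (simp add: fdec_def)

lemma fdec_in_interval:
  assumes "x \<in> {s..t}"
  shows "fdec f a b \<beta> x \<in> {a \<beta>..b \<beta>}"
proof -
  consider "x = s" | "x = t" | "s < x" "x < t" using assms by force
  then show ?thesis
  proof cases
    case 3
    then show ?thesis using fdec_interior f_greater_a_above_s f_less_b_below_t in_unit[OF assms]
      by (simp add: less_imp_le)
  qed (use fdec_s fdec_t f_s_less_b a_less_f_t a_less_b in auto)
qed

lemma pinv_f_a: "pinv f 0 1 (a \<beta>) = s"
  using s_in_unit f_less_a_below_s f_greater_a_above_s by (intro pinv_eqI) (auto intro: less_imp_le)

lemma pinv_f_s: "pinv f 0 1 (f s) = s"
  using pinv_apply[OF mono s_in_unit] .

lemma pinv_f_near_t:
  assumes "b \<beta> \<le> v" "v \<le> f t"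
  shows "pinv f 0 1 v = t"
proof (rule pinv_eqI)
  show "\<forall>z\<in>{0..1}. z < t \<longrightarrow> f z < v" using f_less_b_below_t assms(1) by fastforce
  show "\<forall>z\<in>{0..1}. t < z \<longrightarrow> v \<le> f z"
    using strict_mono_onD[OF mono t_in_unit] assms(2) by fastforce
qed (use t_in_unit in auto)

lemma pinv_f_eq_pinv_fdec:
  assumes w: "w \<in> {a \<beta>..b \<beta>}"
  shows "pinv f 0 1 w = pinv (fdec f a b \<beta>) s t w"
proof -
  define c where "c = pinv f 0 1 w"
  note threshold = pinv_threshold[OF strict_mono_on_imp_mono_on[OF mono] zero_le_one, of w, folded c_def]
  have "s \<le> c"
  proof (rule ccontr)
    assume "\<not> s \<le> c"
    then have "w \<le> f ((c + s) / 2)" "f ((c + s) / 2) < a \<beta>"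
      using threshold s_in_unit f_less_a_below_s[of "(c + s) / 2"] by auto
    then show False using w by simp
  qed
  have "c \<le> t"
  proof (rule ccontr)
    assume "\<not> c \<le> t"
    then have "f ((c + t) / 2) < w" "b \<beta> < f ((c + t) / 2)"
      using threshold t_in_unit f_greater_b_above_t[of "(c + t) / 2"] by auto
    then show False using w by simp
  qed
  have "pinv (fdec f a b \<beta>) s t w = c"
  proof (rule pinv_eqI[OF \<open>s \<le> c\<close> \<open>c \<le> t\<close>]; intro ballI impI)
    fix z assume z: "z \<in> {s..t}" "z < c"
    have "f z < w" using threshold(2) in_unit[OF z(1)] z(2) by blast
    moreover have "a \<beta> < w"
    proof -
      define m where "m = (z + c) / 2"
      have "m \<in> {0..1}" "s < m" "m < c" using z \<open>c \<le> t\<close> s_in_unit t_in_unit by (auto simp: m_def)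
      then show ?thesis using threshold(2) f_greater_a_above_s by fastforce
    qed
    ultimately show "fdec f a b \<beta> z < w"
      using z \<open>c \<le> t\<close> fdec_s fdec_interior by (cases "z = s") auto
  next
    fix z assume z: "z \<in> {s..t}" "c < z"
    have "w \<le> f z" using threshold(3) in_unit[OF z(1)] z(2) by blast
    then show "w \<le> fdec f a b \<beta> z"
      using z \<open>s \<le> c\<close> w fdec_t fdec_interior by (cases "z = t") auto
  qed
  then show ?thesis unfolding c_def ..
qed

end

locale ordsum_component = ordinal_sum A a b Fs + decomposition_component f a b \<beta>
  for A a b Fs f \<beta> +
  assumes index: "\<beta> \<in> A"
begin

sublocale rescaled_summand a b Fs \<beta>
  using rescaled_summand[OF index] .

lemma pinv_ordsum_eq_pinv_summand_le:
  assumes x: "x \<in> {s..t}" and y: "y \<in> {s..t}" and "x \<le> y" and "(x, y) \<noteq> (s, s)"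
  shows "pinv f 0 1 (ordsum A a b Fs (f x) (f y)) =
    pinv f 0 1 (summand a b Fs \<beta> (fdec f a b \<beta> x) (fdec f a b \<beta> y))"
proof -
  have "x \<in> {0..1}" "y \<in> {0..1}" using in_unit x y by auto
  consider "f x \<in> {a \<beta>..b \<beta>}" "f y \<in> {a \<beta>..b \<beta>}"
    | "x = s" "f s < a \<beta>" "s < y"
    | "x = t" "y = t" "b \<beta> < f t"
    | "x < t" "f x \<in> {a \<beta>..b \<beta>}" "y = t" "b \<beta> < f t"
  proof (cases "x = s \<and> f s < a \<beta>")
    case True
    then have "s < y" using assms(3,4) by auto
    then show ?thesis using True by (intro that(2)) auto
  next
    case False
    have ax: "a \<beta> \<le> f x"
    proof (cases "x = s")
      case False
      then show ?thesis using f_greater_a_above_s[OF \<open>x \<in> {0..1}\<close>] x by (simp add: less_imp_le)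
    qed (use \<open>\<not> (x = s \<and> f s < a \<beta>)\<close> in simp)
    have xy: "f x \<le> f y"
      using strict_mono_on_imp_mono_on[OF mono] \<open>x \<in> {0..1}\<close> \<open>y \<in> {0..1}\<close> \<open>x \<le> y\<close>
      by (rule mono_onD)
    show ?thesis
    proof (cases "f y \<le> b \<beta>")
      case True
      then show ?thesis using ax xy by (intro that(1)) auto
    next
      case False
      then have "y = t"
        using f_less_b_below_t[OF \<open>y \<in> {0..1}\<close>] y by (cases "y = t") auto
      show ?thesis
      proof (cases "x = t")
        case True
        then show ?thesis using \<open>y = t\<close> \<open>\<not> f y \<le> b \<beta>\<close> by (intro that(3)) auto
      next
        case False
        then have "x < t" using x by simp
        then show ?thesis using f_less_b_below_t[OF \<open>x \<in> {0..1}\<close>] ax \<open>y = t\<close> \<open>\<not> f y \<le> b \<beta>\<close>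
          by (intro that(4)) auto
      qed
    qed
  qed
  then show ?thesis
  proof cases
    case 1
    then show ?thesis by (simp add: ordsum_eq_summand[OF index] fdec_eq_f)
  next
    case 2
    have "ordsum A a b Fs (f x) (f y) = f s"
      using 2 f_greater_a_above_s[OF \<open>y \<in> {0..1}\<close>]
        ordsum_across_endpoint[OF index, of "a \<beta>" "f s" "f y"] by simp
    moreover have "summand a b Fs \<beta> (fdec f a b \<beta> x) (fdec f a b \<beta> y) = a \<beta>"
      using 2 fdec_s summand_bot_left[OF fdec_in_interval[OF y]] by simp
    ultimately show ?thesis using pinv_f_s pinv_f_a by simp
  next
    case 3
    have "summand a b Fs \<beta> (fdec f a b \<beta> x) (fdec f a b \<beta> y) = b \<beta>"
      using 3 fdec_t summand_top_left a_less_b by simp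
    moreover have "ordsum A a b Fs (f x) (f y) \<in> {b \<beta>..f t}"
      using 3 ordsum_diag_above[OF index] by simp
    ultimately show ?thesis using pinv_f_near_t by simp
  next
    case 4
    have "ordsum A a b Fs (f x) (f y) = f x"
      using 4 f_less_b_below_t[OF \<open>x \<in> {0..1}\<close>]
        ordsum_across_endpoint[OF index, of "b \<beta>" "f x" "f t"] by simp
    moreover have "summand a b Fs \<beta> (fdec f a b \<beta> x) (fdec f a b \<beta> y) = f x"
      using 4 fdec_t fdec_eq_f summand_top_right by simp
    ultimately show ?thesis by simp
  qed
qed

lemma pinv_ordsum_eq_pinv_summand:
  assumes "x \<in> {s..t}" and "y \<in> {s..t}" and "(x, y) \<noteq> (s, s)"
  shows "pinv f 0 1 (ordsum A a b Fs (f x) (f y)) =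
    pinv (fdec f a b \<beta>) s t (summand a b Fs \<beta> (fdec f a b \<beta> x) (fdec f a b \<beta> y))"
proof -
  have "pinv f 0 1 (ordsum A a b Fs (f x) (f y)) =
    pinv f 0 1 (summand a b Fs \<beta> (fdec f a b \<beta> x) (fdec f a b \<beta> y))"
    using assms
  proof (induction x y rule: linorder_wlog)
    case (le x y)
    then show ?case by (simp add: pinv_ordsum_eq_pinv_summand_le)
  next
    case (sym x y)
    then show ?case
      using ordsum_commute[of "f x"]
        summand_commute[OF fdec_in_interval fdec_in_interval] by auto
  qed
  also have "\<dots> = pinv (fdec f a b \<beta>) s t (summand a b Fs \<beta> (fdec f a b \<beta> x) (fdec f a b \<beta> y))"
    using summand_in_interval[OF fdec_in_interval fdec_in_interval] assms
    by (intro pinv_f_eq_pinv_fdec) auto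
  finally show ?thesis .
qed

end

text \<open>Neither \<open>f ` {0..1} \<subseteq> {0..1}\<close> nor \<open>B_set A a b f \<noteq> {}\<close> is needed: the claim is about a
  single \<open>\<beta> \<in> B_set A a b f\<close>, and only the values of \<open>f\<close> on \<open>[0, 1]\<close> enter.\<close>

theorem proposition4p1:
  fixes A :: "'i::linorder set" and a b :: "'i \<Rightarrow> real"
    and Fs :: "'i \<Rightarrow> real \<Rightarrow> real \<Rightarrow> real" and f :: "real \<Rightarrow> real"
  assumes "ordsum_data A a b Fs"
    and "strict_mono_on {0..1} f" and "f ` {0..1} \<subseteq> {0..1}"
    and "B_set A a b f \<noteq> {}"
  shows "\<forall>\<beta>\<in>B_set A a b f. \<forall>x\<in>{s_pt f a \<beta>..t_pt f b \<beta>}. \<forall>y\<in>{s_pt f a \<beta>..t_pt f b \<beta>}.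
           (x, y) \<noteq> (s_pt f a \<beta>, s_pt f a \<beta>) \<longrightarrow>
           pinv f 0 1 (ordsum A a b Fs (f x) (f y)) =
           pinv (fdec f a b \<beta>) (s_pt f a \<beta>) (t_pt f b \<beta>)
             (summand a b Fs \<beta> (fdec f a b \<beta> x) (fdec f a b \<beta> y))"
proof (intro ballI impI)
  fix \<beta> x y
  assume "\<beta> \<in> B_set A a b f"
  then interpret ordsum_component A a b Fs f \<beta>
    using assms(1,2) by unfold_locales (auto simp: B_set_def ordinal_sum_def)
  assume "x \<in> {s_pt f a \<beta>..t_pt f b \<beta>}" "y \<in> {s_pt f a \<beta>..t_pt f b \<beta>}"
    and "(x, y) \<noteq> (s_pt f a \<beta>, s_pt f a \<beta>)"
  then show "pinv f 0 1 (ordsum A a b Fs (f x) (f y)) =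
      pinv (fdec f a b \<beta>) (s_pt f a \<beta>) (t_pt f b \<beta>)
        (summand a b Fs \<beta> (fdec f a b \<beta> x) (fdec f a b \<beta> y))"
    by (rule pinv_ordsum_eq_pinv_summand)
qed

end
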